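(* Let $G$ be a graph that has exactly two odd cycles, and suppose these two cycles share no edge. Then the two cycles intersect either in a single vertex or not at all.
   Context: All graphs are finite and simple. An odd cycle is a cycle (subgraph) of odd length. *)

theory Defs
  imports Main
begin

definition simple_graph :: "'a set \<Rightarrow> 'a set set \<Rightarrow> bool" where
  "simple_graph V E \<longleftrightarrow> finite V \<and> (\<forall>e\<in>E. e \<subseteq> V \<and> card e = 2)"

definition cycle_edges :: "'a list \<Rightarrow> 'a set set" where
  "cycle_edges xs = {{xs ! i, xs ! ((i + 1) mod length xs)} | i. i < length xs}"

text \<open>A cycle of the graph, viewed as a subgraph, is identified with its edge set:
  the edge set of a sequence of at least 3 distinct vertices, cyclically adjacent.\<close>
definition is_cycle :: "'a set \<Rightarrow> 'a set set \<Rightarrow> 'a set set \<Rightarrow> bool" where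
  "is_cycle V E C \<longleftrightarrow> (\<exists>xs. distinct xs \<and> length xs \<ge> 3 \<and> set xs \<subseteq> V
      \<and> cycle_edges xs \<subseteq> E \<and> C = cycle_edges xs)"

definition cycle_verts :: "'a set set \<Rightarrow> 'a set" where
  "cycle_verts C = \<Union> C"

definition odd_cycle :: "'a set \<Rightarrow> 'a set set \<Rightarrow> 'a set set \<Rightarrow> bool" where
  "odd_cycle V E C \<longleftrightarrow> is_cycle V E C \<and> odd (card C)"

end

theory Submission
  imports Defs
begin

text \<open>Suppose the odd cycles \<open>C1\<close> and \<open>C2\<close> share two vertices. Walking along \<open>C2\<close> from a
  shared vertex \<open>u\<close> until it first meets \<open>C1\<close> again, at \<open>b \<noteq> u\<close>, gives a path \<open>P\<close> (an ear)
  whose interior avoids \<open>C1\<close>. The vertices \<open>u\<close> and \<open>b\<close> split \<open>C1\<close> into two paths, and \<open>P\<close>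
  closes each of them into a cycle. The lengths of these two cycles add up to
  \<open>|C1| + 2|P|\<close>, which is odd, so one of them is an odd cycle. It contains edges of
  both \<open>C1\<close> and \<open>C2\<close>, so as these are edge-disjoint it is a third odd cycle.\<close>

fun path_edges :: "'a list \<Rightarrow> 'a set set" where
  "path_edges (x # y # zs) = insert {x, y} (path_edges (y # zs))"
| "path_edges _ = {}"

lemma path_edges_append: "path_edges (xs @ y # ys) = path_edges (xs @ [y]) \<union> path_edges (y # ys)"
  by (induction xs rule: induct_list012) auto

lemma path_edges_rev: "path_edges (rev xs) = path_edges xs"
proof (induction xs rule: induct_list012)
  case (3 x y zs)
  then show ?case
    using path_edges_append[of "rev zs" y "[x]"] by (auto simp: insert_commute)
qed auto

lemma path_edges_conv_nth: "path_edges xs = {{xs ! i, xs ! Suc i} | i. Suc i < length xs}"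
proof (induction xs rule: induct_list012)
  case (3 x y zs)
  have shift: "{g i | i. i < Suc n} = insert (g 0) {g (Suc i) | i. i < n}" for g :: "nat \<Rightarrow> 'a set" and n
    by (auto simp: less_Suc_eq_0_disj)
  show ?case
    using shift[of "\<lambda>i. {(x # y # zs) ! i, (x # y # zs) ! Suc i}" "length zs"] 3 by simp
qed auto

lemma cycle_edges_Cons: "cycle_edges (x # xs) = path_edges (x # xs @ [x])"
proof -
  let ?c = "x # xs" and ?p = "x # xs @ [x]"
  have "cycle_edges ?c = (\<lambda>i. {?c ! i, ?c ! ((i + 1) mod length ?c)}) ` {..<length ?c}"
    unfolding cycle_edges_def by auto
  also have "\<dots> = (\<lambda>i. {?p ! i, ?p ! Suc i}) ` {..<length ?c}"
  proof (rule image_cong)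
    fix i assume "i \<in> {..<length ?c}"
    then have "i < length ?c" by simp
    then show "{?c ! i, ?c ! ((i + 1) mod length ?c)} = {?p ! i, ?p ! Suc i}"
      using nth_append[of ?c "[x]" i] nth_append[of ?c "[x]" "Suc i"]
      by (cases "Suc i < length ?c") (auto simp: mod_if)
  qed simp
  also have "\<dots> = path_edges ?p"
    unfolding path_edges_conv_nth by auto
  finally show ?thesis .
qed

lemma cycle_edges_glue:
  "cycle_edges (a # xs @ b # ys) = path_edges (a # xs @ [b]) \<union> path_edges (b # ys @ [a])"
  using path_edges_append[of "a # xs" b "ys @ [a]"] by (simp add: cycle_edges_Cons)

lemma cycle_edges_rotate1: "cycle_edges (rotate1 xs) = cycle_edges xs"
proof (cases xs)
  case (Cons x ys)
  then show ?thesis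
    using cycle_edges_glue[of x "[]" "hd ys" "tl ys"] cycle_edges_glue[of "hd ys" "tl ys" x "[]"]
    by (cases ys) (simp_all add: Un_commute)
qed simp

lemma cycle_edges_rotate: "cycle_edges (rotate n xs) = cycle_edges xs"
  by (induction n) (simp_all add: cycle_edges_rotate1)

lemma rotate_to_head:
  assumes "x \<in> set xs"
  obtains n ys where "rotate n xs = x # ys"
proof -
  obtain as bs where "xs = as @ x # bs"
    using split_list[OF assms] by blast
  then have "rotate (length as) xs = x # bs @ as"
    by (simp add: rotate_append)
  then show ?thesis by (rule that)
qed

lemma card_cycle_edges:
  assumes "distinct xs" and "3 \<le> length xs"
  shows "card (cycle_edges xs) = length xs"
proof -
  let ?n = "length xs"
  let ?e = "\<lambda>i. {xs ! i, xs ! ((i + 1) mod ?n)}"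
  have "inj_on ?e {..<?n}"
  proof (rule inj_onI, rule ccontr)
    fix i j assume i: "i \<in> {..<?n}" and j: "j \<in> {..<?n}" and eq: "?e i = ?e j" and "i \<noteq> j"
    have n: "0 < ?n" using assms(2) by linarith
    have "xs ! i \<noteq> xs ! j"
      using nth_eq_iff_index_eq[OF assms(1)] i j \<open>i \<noteq> j\<close> by simp
    then have "xs ! i = xs ! ((j + 1) mod ?n)" "xs ! j = xs ! ((i + 1) mod ?n)"
      using eq by (auto simp: doubleton_eq_iff)
    then have ij: "i = (j + 1) mod ?n" "j = (i + 1) mod ?n"
      using nth_eq_iff_index_eq[OF assms(1)] i j n by simp_all
    have "(i + 2) mod ?n = ((i + 1) mod ?n + 1) mod ?n"
      by (simp add: mod_Suc_eq)
    also have "\<dots> = i"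
      by (simp only: ij(2)[symmetric] ij(1)[symmetric])
    finally have "(i + 2) mod ?n = i" .
    then show False
      using i assms(2) by (auto simp: mod_if split: if_splits)
  qed
  moreover have "cycle_edges xs = ?e ` {..<?n}"
    unfolding cycle_edges_def by auto
  ultimately show ?thesis
    by (simp add: card_image)
qed

lemma Union_path_edges: "\<Union> (path_edges (x # y # zs)) = set (x # y # zs)"
  by (induction zs arbitrary: x y) auto

lemma cycle_verts_cycle_edges:
  assumes "xs \<noteq> []"
  shows "cycle_verts (cycle_edges xs) = set xs"
proof -
  obtain x xs' where xs: "xs = x # xs'"
    using assms by (cases xs) auto
  obtain y zs where "xs' @ [x] = y # zs"
    by (cases "xs' @ [x]") auto
  then have "cycle_verts (cycle_edges xs) = set (x # xs' @ [x])"
    unfolding xs cycle_verts_def cycle_edges_Cons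
    using Union_path_edges[of x y zs] by simp
  then show ?thesis
    unfolding xs by auto
qed

lemma odd_cycle_iff:
  "odd_cycle V E C \<longleftrightarrow> (\<exists>xs. distinct xs \<and> 3 \<le> length xs \<and> set xs \<subseteq> V
     \<and> cycle_edges xs \<subseteq> E \<and> C = cycle_edges xs \<and> odd (length xs))"
  unfolding odd_cycle_def is_cycle_def using card_cycle_edges by metis

lemma cycle_contains_ear:
  assumes "distinct ys" and "u \<in> set ys" and "v \<in> set ys" and "u \<noteq> v" and "v \<in> A"
  obtains ps b where "distinct (u # ps @ [b])" and "b \<in> A" and "set ps \<inter> A = {}"
    and "set ps \<subseteq> set ys" and "path_edges (u # ps @ [b]) \<subseteq> cycle_edges ys"
proof -
  obtain n t where rot: "rotate n ys = u # t"
    using rotate_to_head[OF assms(2)] by blast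
  have "distinct (u # t)" and set_t: "set (u # t) = set ys"
    using assms(1) rot by (metis distinct_rotate, metis set_rotate)
  then have "\<exists>y\<in>set t. y \<in> A"
    using assms(3-5) by auto
  then obtain ps b zs where t: "t = ps @ b # zs" and "b \<in> A" and "\<forall>y\<in>set ps. y \<notin> A"
    using split_list_first_prop[of t "\<lambda>y. y \<in> A"] by blast
  have "cycle_edges ys = cycle_edges (u # ps @ b # zs)"
    using rot t cycle_edges_rotate by metis
  also have "\<dots> = path_edges (u # ps @ [b]) \<union> path_edges (b # zs @ [u])"
    by (rule cycle_edges_glue)
  finally have "path_edges (u # ps @ [b]) \<subseteq> cycle_edges ys"
    by blast
  moreover have "distinct (u # ps @ [b])"
    using \<open>distinct (u # t)\<close> t by auto
  moreover have "set ps \<inter> A = {}"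
    using \<open>\<forall>y\<in>set ps. y \<notin> A\<close> by blast
  moreover have "set ps \<subseteq> set ys"
    using set_t t by auto
  ultimately show ?thesis
    using that \<open>b \<in> A\<close> by blast
qed

lemma odd_cycle_in_cycle_plus_ear:
  assumes "distinct (b # r1 @ u # r2)" and "odd (length (b # r1 @ u # r2))"
    and "distinct (u # ps @ [b])" and "set ps \<inter> set (b # r1 @ u # r2) = {}"
  obtains zs where "distinct zs" and "3 \<le> length zs" and "odd (length zs)"
    and "set zs \<subseteq> set (b # r1 @ u # r2) \<union> set ps"
    and "cycle_edges zs \<subseteq> cycle_edges (b # r1 @ u # r2) \<union> path_edges (u # ps @ [b])"
    and "cycle_edges zs \<inter> cycle_edges (b # r1 @ u # r2) \<noteq> {}"
    and "path_edges (u # ps @ [b]) \<subseteq> cycle_edges zs"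
proof -
  let ?Q1 = "b # r1 @ [u]" and ?Q2 = "u # r2 @ [b]" and ?P = "u # ps @ [b]"
  let ?Z1 = "b # r1 @ u # ps" and ?Z2 = "u # r2 @ b # rev ps"
  have C: "cycle_edges (b # r1 @ u # r2) = path_edges ?Q1 \<union> path_edges ?Q2"
    by (rule cycle_edges_glue)
  have Z1: "cycle_edges ?Z1 = path_edges ?Q1 \<union> path_edges ?P"
    by (rule cycle_edges_glue)
  have Z2: "cycle_edges ?Z2 = path_edges ?Q2 \<union> path_edges ?P"
    using cycle_edges_glue[of u r2 b "rev ps"] path_edges_rev[of ?P] by simp
  have Q1: "path_edges ?Q1 \<noteq> {}" and Q2: "path_edges ?Q2 \<noteq> {}"
    by (cases r1; simp) (cases r2; simp)
  have "distinct ?Z1" and "distinct ?Z2"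
    using assms(1,3,4) by auto
  moreover have "odd (length ?Z1) \<or> odd (length ?Z2)"
    using assms(2) by auto
  ultimately show ?thesis
  proof (elim disjE)
    assume "distinct ?Z1" and odd: "odd (length ?Z1)"
    moreover have "3 \<le> length ?Z1"
      using odd by (cases r1; cases ps) auto
    ultimately show ?thesis
      using that[of ?Z1] C Z1 Q1 by auto
  next
    assume "distinct ?Z2" and odd: "odd (length ?Z2)"
    moreover have "3 \<le> length ?Z2"
      using odd by (cases r2; cases ps) auto
    ultimately show ?thesis
      using that[of ?Z2] C Z2 Q2 by auto
  qed
qed

lemma odd_cycle_through_shared_vertices:
  assumes "odd_cycle V E C1" and "is_cycle V E C2"
    and "u \<in> cycle_verts C1 \<inter> cycle_verts C2" and "v \<in> cycle_verts C1 \<inter> cycle_verts C2"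
    and "u \<noteq> v"
  obtains C where "odd_cycle V E C" and "C \<inter> C1 \<noteq> {}" and "C \<inter> C2 \<noteq> {}"
proof -
  obtain xs where xs: "distinct xs" "3 \<le> length xs" "set xs \<subseteq> V" "cycle_edges xs \<subseteq> E"
      "C1 = cycle_edges xs" "odd (length xs)"
    using assms(1) unfolding odd_cycle_iff by blast
  obtain ys where ys: "distinct ys" "3 \<le> length ys" "set ys \<subseteq> V" "cycle_edges ys \<subseteq> E"
      "C2 = cycle_edges ys"
    using assms(2) unfolding is_cycle_def by blast
  have "xs \<noteq> []" and "ys \<noteq> []"
    using xs(2) ys(2) by auto
  then have verts: "cycle_verts C1 = set xs" "cycle_verts C2 = set ys"
    unfolding xs(5) ys(5) by (simp_all add: cycle_verts_cycle_edges)
  then have "u \<in> set ys" "v \<in> set ys" "v \<in> set xs"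
    using assms(3,4) by auto
  then obtain ps b where P: "distinct (u # ps @ [b])" "b \<in> set xs" "set ps \<inter> set xs = {}"
      "set ps \<subseteq> set ys" "path_edges (u # ps @ [b]) \<subseteq> cycle_edges ys"
    by (rule cycle_contains_ear[OF ys(1) _ _ assms(5)])
  obtain n r where rot: "rotate n xs = b # r"
    using rotate_to_head[OF P(2)] by blast
  have "u \<in> set (b # r)" and "u \<noteq> b"
    using assms(3) verts P(1) set_rotate[of n xs] unfolding rot by auto
  then obtain r1 r2 where "r = r1 @ u # r2"
    using split_list by fastforce
  with rot have rot': "rotate n xs = b # r1 @ u # r2"
    by simp
  have xs': "distinct (b # r1 @ u # r2)" "odd (length (b # r1 @ u # r2))"
      "set (b # r1 @ u # r2) = set xs" "cycle_edges (b # r1 @ u # r2) = C1"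
    unfolding rot'[symmetric] using xs by (simp_all add: cycle_edges_rotate)
  then have "set ps \<inter> set (b # r1 @ u # r2) = {}"
    using P(3) by simp
  then obtain zs where Z: "distinct zs" "3 \<le> length zs" "odd (length zs)"
      "set zs \<subseteq> set (b # r1 @ u # r2) \<union> set ps"
      "cycle_edges zs \<subseteq> cycle_edges (b # r1 @ u # r2) \<union> path_edges (u # ps @ [b])"
      "cycle_edges zs \<inter> cycle_edges (b # r1 @ u # r2) \<noteq> {}"
      "path_edges (u # ps @ [b]) \<subseteq> cycle_edges zs"
    by (rule odd_cycle_in_cycle_plus_ear[OF xs'(1,2) P(1)])
  have "odd_cycle V E (cycle_edges zs)"
    unfolding odd_cycle_iff
  proof (intro exI conjI)
    show "set zs \<subseteq> V"
      using Z(4) xs'(3) xs(3) P(4) ys(3) by blast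
    show "cycle_edges zs \<subseteq> E"
      using Z(5) xs'(4) xs(4,5) P(5) ys(4) by blast
  qed (use Z(1-3) in simp_all)
  moreover have "path_edges (u # ps @ [b]) \<noteq> {}"
    by (cases ps) auto
  ultimately show ?thesis
    using that Z(6,7) xs'(4) P(5) ys(5) by blast
qed

theorem lemma2p1:
  fixes V :: "'a set" and E :: "'a set set" and C1 C2 :: "'a set set"
  assumes "simple_graph V E"
    and "C1 \<noteq> C2"
    and "{C. odd_cycle V E C} = {C1, C2}"
    and "C1 \<inter> C2 = {}"
  shows "card (cycle_verts C1 \<inter> cycle_verts C2) \<le> 1"
proof (rule ccontr)
  let ?S = "cycle_verts C1 \<inter> cycle_verts C2"
  have odd_cycles: "odd_cycle V E C \<longleftrightarrow> C = C1 \<or> C = C2" for C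
    using arg_cong[where f = "\<lambda>S. C \<in> S", OF assms(3)] by simp
  have cycles: "odd_cycle V E C1" "is_cycle V E C2"
    using odd_cycles unfolding odd_cycle_def by blast+
  assume "\<not> card ?S \<le> 1"
  moreover from this have "finite ?S"
    by (metis card.infinite le0)
  ultimately obtain u v where "u \<in> ?S" "v \<in> ?S" "u \<noteq> v"
    unfolding One_nat_def card_le_Suc0_iff_eq[OF \<open>finite ?S\<close>] by blast
  then obtain C where "odd_cycle V E C" and "C \<inter> C1 \<noteq> {}" and "C \<inter> C2 \<noteq> {}"
    by (rule odd_cycle_through_shared_vertices[OF cycles])
  then show False
    using assms(4) odd_cycles by blast
qed

end
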